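(* Let $n\ge 2$. Every equilibrium graph $G$ of $(1,1,\dots,1)$-BG (all $n$ budgets equal to $1$) in the SUM version has connected underlying graph $U(G)$, $U(G)$ has a unique cycle, this cycle has at most $5$ vertices, and every vertex is either on the cycle or adjacent in $U(G)$ to a vertex of the cycle.
   Context: Bounded budget network creation game $(b_1,\dots,b_n)$-BG: $n$ players with integer budgets $0\le b_i\le n-1$. A strategy of player $i$ is a set $S_i\subseteq\{1,\dots,n\}\setminus\{i\}$ with $|S_i|=b_i$; a profile is realized by the directed graph $G$ on $u_1,\dots,u_n$ with an arc $\overrightarrow{u_iu_j}$ iff $j\in S_i$. $U(G)$ is the undirected multigraph obtained by ignoring directions; if both $\overrightarrow{uv}$ and $\overrightarrow{vu}$ are arcs (a brace), $uv$ is a double edge of $U(G)$, regarded as a cycle with 2 vertices. $\operatorname{dist}(u,v)$ is the distance in $U(G)$, defined as $n^2$ between different components. SUM cost: $c_{SUM}(u)=\sum_v\operatorname{dist}(u,v)$. An equilibrium graph in the SUM version is a realization in which no vertex can decrease its SUM cost by changing its own strategy while the others are fixed. *)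

theory Defs
  imports Main
begin

definition valid_strategy :: "nat \<Rightarrow> (nat \<Rightarrow> nat) \<Rightarrow> nat \<Rightarrow> nat set \<Rightarrow> bool" where
  "valid_strategy n b i T \<longleftrightarrow> T \<subseteq> {..<n} - {i} \<and> card T = b i"

definition valid_profile :: "nat \<Rightarrow> (nat \<Rightarrow> nat) \<Rightarrow> (nat \<Rightarrow> nat set) \<Rightarrow> bool" where
  "valid_profile n b S \<longleftrightarrow> (\<forall>i<n. valid_strategy n b i (S i))"

definition arcs :: "nat \<Rightarrow> (nat \<Rightarrow> nat set) \<Rightarrow> (nat \<times> nat) set" where
  "arcs n S = {(i, j). i < n \<and> j < n \<and> j \<in> S i}"

definition adj :: "nat \<Rightarrow> (nat \<Rightarrow> nat set) \<Rightarrow> nat \<Rightarrow> nat \<Rightarrow> bool" where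
  "adj n S u v \<longleftrightarrow> (u, v) \<in> arcs n S \<or> (v, u) \<in> arcs n S"

definition walk_len :: "nat \<Rightarrow> (nat \<Rightarrow> nat set) \<Rightarrow> nat \<Rightarrow> nat \<Rightarrow> nat \<Rightarrow> bool" where
  "walk_len n S u v k \<longleftrightarrow>
     (\<exists>p :: nat \<Rightarrow> nat. p 0 = u \<and> p k = v \<and> (\<forall>i<k. adj n S (p i) (p (Suc i))))"

definition reachable :: "nat \<Rightarrow> (nat \<Rightarrow> nat set) \<Rightarrow> nat \<Rightarrow> nat \<Rightarrow> bool" where
  "reachable n S u v \<longleftrightarrow> (\<exists>k. walk_len n S u v k)"

text \<open>Distance in U(G); n^2 between different components.\<close>
definition gdist :: "nat \<Rightarrow> (nat \<Rightarrow> nat set) \<Rightarrow> nat \<Rightarrow> nat \<Rightarrow> nat" where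
  "gdist n S u v = (if reachable n S u v then (LEAST k. walk_len n S u v k) else n ^ 2)"

definition cost_sum :: "nat \<Rightarrow> (nat \<Rightarrow> nat set) \<Rightarrow> nat \<Rightarrow> nat" where
  "cost_sum n S u = (\<Sum>v<n. gdist n S u v)"

definition sum_equilibrium :: "nat \<Rightarrow> (nat \<Rightarrow> nat) \<Rightarrow> (nat \<Rightarrow> nat set) \<Rightarrow> bool" where
  "sum_equilibrium n b S \<longleftrightarrow> valid_profile n b S \<and>
     (\<forall>i<n. \<forall>T. valid_strategy n b i T \<longrightarrow> cost_sum n S i \<le> cost_sum n (S(i := T)) i)"

definition connected_U :: "nat \<Rightarrow> (nat \<Rightarrow> nat set) \<Rightarrow> bool" where
  "connected_U n S \<longleftrightarrow> (\<forall>u<n. \<forall>v<n. reachable n S u v)"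

text \<open>For k = 2 this is exactly a brace (double edge).\<close>
definition is_cycle :: "nat \<Rightarrow> (nat \<Rightarrow> nat set) \<Rightarrow> (nat \<times> nat) set \<Rightarrow> bool" where
  "is_cycle n S C \<longleftrightarrow>
     (\<exists>vs es. length vs \<ge> 2 \<and> length es = length vs \<and> distinct vs \<and> distinct es \<and>
        set es \<subseteq> arcs n S \<and> C = set es \<and>
        (\<forall>m<length vs. es ! m = (vs ! m, vs ! (Suc m mod length vs)) \<or>
                        es ! m = (vs ! (Suc m mod length vs), vs ! m)))"

definition cycle_vertices :: "(nat \<times> nat) set \<Rightarrow> nat set" where
  "cycle_vertices C = fst ` C \<union> snd ` C"

end

theory Submission
  imports Defs
begin

text \<open>With unit budgets every vertex buys exactly one arc, so the realization is the functional
  graph of a map \<open>g\<close> without fixed points, and the cycles of \<open>U(G)\<close> are the cycles of \<open>g\<close>.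
  In an equilibrium \<open>U(G)\<close> is connected: a vertex on a cycle that redirects its arc into another
  component still reaches its old component, paying less than \<open>n\<close> extra per vertex there, but
  saves \<open>n\<^sup>2\<close> on the new one. Hence \<open>g\<close> has a single cycle. If a vertex \<open>z\<close> had distance two
  from the cycle, then \<open>z\<close> redirecting to its grandparent \<open>c\<close> and the cycle predecessor of \<open>c\<close>
  redirecting to the parent of \<open>z\<close> could not both be unprofitable: the two equilibrium
  inequalities add up to a contradiction. Finally, if the cycle had length at least six, the
  inequality for a cycle vertex redirecting to its second successor would give
  \<open>s(c\<^sub>2) + s(c\<^sub>3) \<le> s(c\<^sub>1)\<close> for its successors \<open>c\<^sub>1, c\<^sub>2, c\<^sub>3\<close>, where \<open>s(c)\<close> counts \<open>c\<close> and
  the leaves attached to it; this fails for \<open>c\<^sub>2\<close> with \<open>s(c\<^sub>2)\<close> maximal.\<close>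

section \<open>Walks and distances\<close>

lemma adj_sym: "adj n S u v \<Longrightarrow> adj n S v u"
  by (auto simp: adj_def)

lemma adj_imp_less: "adj n S u v \<Longrightarrow> u < n \<and> v < n"
  by (auto simp: adj_def arcs_def)

lemma walk_len_intro:
  "p 0 = u \<Longrightarrow> p k = v \<Longrightarrow> (\<forall>i<k. adj n S (p i) (p (Suc i))) \<Longrightarrow> walk_len n S u v k"
  unfolding walk_len_def by blast

lemma walk_len_0_iff: "walk_len n S u v 0 \<longleftrightarrow> u = v"
  unfolding walk_len_def by auto

lemma walk_len_Suc_iff:
  "walk_len n S u v (Suc k) \<longleftrightarrow> (\<exists>w. walk_len n S u w k \<and> adj n S w v)"
proof
  assume "walk_len n S u v (Suc k)"
  then obtain p where p: "p 0 = u" "p (Suc k) = v" "\<forall>i<Suc k. adj n S (p i) (p (Suc i))"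
    unfolding walk_len_def by blast
  then have "walk_len n S u (p k) k" by (intro walk_len_intro) auto
  with p show "\<exists>w. walk_len n S u w k \<and> adj n S w v" by auto
next
  assume "\<exists>w. walk_len n S u w k \<and> adj n S w v"
  then obtain p where p: "p 0 = u" "\<forall>i<k. adj n S (p i) (p (Suc i))" "adj n S (p k) v"
    unfolding walk_len_def by blast
  show "walk_len n S u v (Suc k)"
    by (rule walk_len_intro[of "p(Suc k := v)"]) (use p in \<open>auto simp: less_Suc_eq\<close>)
qed

lemma walk_len_1_iff: "walk_len n S u v (Suc 0) \<longleftrightarrow> adj n S u v"
  by (simp add: walk_len_Suc_iff walk_len_0_iff)

lemma walk_len_2_iff: "walk_len n S u v (Suc (Suc 0)) \<longleftrightarrow> (\<exists>w. adj n S u w \<and> adj n S w v)"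
  by (simp add: walk_len_Suc_iff walk_len_0_iff)

lemma walk_len_append:
  "walk_len n S u v k \<Longrightarrow> walk_len n S v w m \<Longrightarrow> walk_len n S u w (k + m)"
proof (induction m arbitrary: w)
  case 0
  then show ?case by (simp add: walk_len_0_iff)
next
  case (Suc m)
  then obtain w' where "walk_len n S v w' m" "adj n S w' w" by (auto simp: walk_len_Suc_iff)
  with Suc show ?case by (auto simp: walk_len_Suc_iff)
qed

lemma walk_len_Cons: "adj n S u w \<Longrightarrow> walk_len n S w v k \<Longrightarrow> walk_len n S u v (Suc k)"
  using walk_len_append[of n S u w "Suc 0" v k] by (simp add: walk_len_1_iff)

lemma walk_len_sym: "walk_len n S u v k \<Longrightarrow> walk_len n S v u k"
proof (induction k arbitrary: v)
  case 0
  then show ?case by (simp add: walk_len_0_iff)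
next
  case (Suc k)
  then obtain w where "walk_len n S u w k" "adj n S w v" by (auto simp: walk_len_Suc_iff)
  with Suc.IH show ?case using walk_len_Cons adj_sym by metis
qed

lemma reachable_refl: "reachable n S u u"
  unfolding reachable_def using walk_len_0_iff by blast

lemma reachable_sym: "reachable n S u v \<Longrightarrow> reachable n S v u"
  unfolding reachable_def using walk_len_sym by blast

lemma reachable_trans: "reachable n S u v \<Longrightarrow> reachable n S v w \<Longrightarrow> reachable n S u w"
  unfolding reachable_def using walk_len_append by blast

lemma reachable_adj: "adj n S u v \<Longrightarrow> reachable n S u v"
  unfolding reachable_def walk_len_1_iff[symmetric] by blast

lemma reachable_mono:
  assumes "\<And>a b. adj n S a b \<Longrightarrow> reachable n S' a b" and "reachable n S u v"
  shows "reachable n S' u v"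
proof -
  obtain k where "walk_len n S u v k" using assms(2) unfolding reachable_def by blast
  then show ?thesis
  proof (induction k arbitrary: v)
    case 0
    then show ?case by (simp add: walk_len_0_iff reachable_refl)
  next
    case (Suc k)
    then obtain w where "walk_len n S u w k" "adj n S w v" by (auto simp: walk_len_Suc_iff)
    with Suc.IH assms(1) show ?case using reachable_trans by metis
  qed
qed

lemma gdist_le_walk_len: "walk_len n S u v k \<Longrightarrow> gdist n S u v \<le> k"
  unfolding gdist_def by (auto simp: reachable_def intro: Least_le)

lemma walk_len_gdist: "reachable n S u v \<Longrightarrow> walk_len n S u v (gdist n S u v)"
  unfolding gdist_def reachable_def by (auto intro: LeastI)

lemma gdist_geI:
  "reachable n S u v \<Longrightarrow> (\<And>k. k < m \<Longrightarrow> \<not> walk_len n S u v k) \<Longrightarrow> m \<le> gdist n S u v"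
  using walk_len_gdist not_less by blast

lemma gdist_self [simp]: "gdist n S u u = 0"
  using gdist_le_walk_len[of n S u u 0] by (simp add: walk_len_0_iff)

lemma gdist_sym: "gdist n S u v = gdist n S v u"
proof -
  have "walk_len n S u v = walk_len n S v u" using walk_len_sym by (intro ext iffI) blast+
  then show ?thesis
    unfolding gdist_def reachable_def by (rule arg_cong[where f = "\<lambda>P. if Ex P then Least P else n\<^sup>2"])
qed

lemma gdist_ge_1: "reachable n S u v \<Longrightarrow> u \<noteq> v \<Longrightarrow> 1 \<le> gdist n S u v"
  using walk_len_gdist[of n S u v] by (cases "gdist n S u v") (auto simp: walk_len_0_iff)

lemma gdist_adj_le: "reachable n S u a \<Longrightarrow> adj n S a b \<Longrightarrow> gdist n S u b \<le> gdist n S u a + 1"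
  using walk_len_gdist[of n S u a] gdist_le_walk_len[of n S u b "Suc (gdist n S u a)"]
  by (auto simp: walk_len_Suc_iff)

lemma gdist_unreachable: "\<not> reachable n S u v \<Longrightarrow> gdist n S u v = n\<^sup>2"
  unfolding gdist_def by simp

lemma walk_shortcut:
  assumes "p 0 = u" "p k = v" "\<forall>i<k. adj n S (p i) (p (Suc i))"
    and "i < j" "j \<le> k" "p i = p j"
  shows "walk_len n S u v (k - (j - i))"
proof (rule walk_len_intro)
  define q where "q m = (if m \<le> i then p m else p (m + (j - i)))" for m
  show "q 0 = u" using assms by (simp add: q_def)
  show "q (k - (j - i)) = v"
  proof (cases "k - (j - i) \<le> i")
    case True
    with assms(4,5) have "k = j" by arith
    with True assms show ?thesis by (simp add: q_def)
  qed (use assms in \<open>simp add: q_def\<close>)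
  show "\<forall>m<k - (j - i). adj n S (q m) (q (Suc m))"
  proof (intro allI impI)
    fix m assume m: "m < k - (j - i)"
    show "adj n S (q m) (q (Suc m))"
    proof (cases "m < i")
      case True
      with assms m show ?thesis by (auto simp: q_def)
    next
      case False
      with m assms have "adj n S (p (m + (j - i))) (p (Suc (m + (j - i))))" by auto
      with False assms show ?thesis by (cases "m = i") (auto simp: q_def)
    qed
  qed
qed

lemma shortest_walk:
  assumes "reachable n S u v"
  obtains p where "p 0 = u" "p (gdist n S u v) = v"
    "\<forall>i<gdist n S u v. adj n S (p i) (p (Suc i))" "inj_on p {..gdist n S u v}"
proof -
  let ?k = "gdist n S u v"
  obtain p where p: "p 0 = u" "p ?k = v" "\<forall>i<?k. adj n S (p i) (p (Suc i))"
    using walk_len_gdist[OF assms] unfolding walk_len_def by blast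
  have no_repeat: "p i \<noteq> p j" if "i < j" "j \<le> ?k" for i j
  proof
    assume "p i = p j"
    then have "?k \<le> ?k - (j - i)" by (intro gdist_le_walk_len walk_shortcut[OF p that])
    with that show False by simp
  qed
  have "inj_on p {..?k}"
  proof (rule inj_onI, rule ccontr)
    fix i j assume "i \<in> {..?k}" "j \<in> {..?k}" "p i = p j" "i \<noteq> j"
    then show False using no_repeat[of i j] no_repeat[of j i] by (auto simp: linorder_neq_iff)
  qed
  with p that show ?thesis by blast
qed

lemma lipschitz_le_gdist:
  fixes \<phi> :: "nat \<Rightarrow> nat"
  assumes "\<And>a b. adj n S a b \<Longrightarrow> \<phi> b \<le> \<phi> a + 1" and "reachable n S u v"
  shows "\<phi> v \<le> \<phi> u + gdist n S u v"
proof -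
  have "\<phi> v \<le> \<phi> u + k" if "walk_len n S u v k" for v k
    using that
  proof (induction k arbitrary: v)
    case 0
    then show ?case by (simp add: walk_len_0_iff)
  next
    case (Suc k)
    then obtain w where "walk_len n S u w k" "adj n S w v" by (auto simp: walk_len_Suc_iff)
    with Suc.IH assms(1)[of w v] show ?case by fastforce
  qed
  with walk_len_gdist[OF assms(2)] show ?thesis by blast
qed

lemma gdist_less:
  assumes "reachable n S u v" "u < n"
  shows "gdist n S u v < n"
proof -
  let ?k = "gdist n S u v"
  obtain p where p: "p 0 = u" "p ?k = v" "\<forall>i<?k. adj n S (p i) (p (Suc i))" "inj_on p {..?k}"
    by (rule shortest_walk[OF assms(1)])
  have "p i < n" if "i \<le> ?k" for i
  proof (cases i)
    case (Suc j)
    with that p(3) show ?thesis using adj_imp_less[of n S "p j" "p (Suc j)"] by simp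
  qed (use p(1) assms(2) in simp)
  then have "p ` {..?k} \<subseteq> {..<n}" by auto
  then have "card (p ` {..?k}) \<le> n" by (metis card_lessThan card_mono finite_lessThan)
  moreover have "card (p ` {..?k}) = Suc ?k" using p(4) by (simp add: card_image)
  ultimately show ?thesis by simp
qed

lemma gdist_le_square:
  assumes "u < n"
  shows "gdist n S u v \<le> n\<^sup>2"
proof (cases "reachable n S u v")
  case True
  then have "gdist n S u v < n" using assms by (rule gdist_less)
  moreover have "n \<le> n\<^sup>2" using le_square[of n] by (simp only: power2_eq_square)
  ultimately show ?thesis by linarith
qed (simp add: gdist_unreachable)

lemma exists_step_out:
  fixes P :: "nat \<Rightarrow> bool"
  assumes "P m" "\<not> P j" "m \<le> j"
  shows "\<exists>i. m \<le> i \<and> i < j \<and> P i \<and> \<not> P (Suc i)"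
  using assms
proof (induction j)
  case 0
  then show ?case by simp
next
  case (Suc j)
  then have "m \<le> j" by (cases "m = Suc j") auto
  show ?case
  proof (cases "P j")
    case True
    with Suc.prems \<open>m \<le> j\<close> show ?thesis by (intro exI[of _ j]) auto
  next
    case False
    with Suc.IH Suc.prems \<open>m \<le> j\<close> obtain i where "m \<le> i" "i < j" "P i" "\<not> P (Suc i)"
      by blast
    then show ?thesis by (intro exI[of _ i]) auto
  qed
qed

lemma sum_of_bool_mem_lessThan:
  fixes n :: nat
  assumes "A \<subseteq> {..<n}"
  shows "(\<Sum>v<n. of_bool (v \<in> A) :: nat) = card A"
proof -
  have "(\<Sum>v<n. of_bool (v \<in> A) :: nat) = card ({..<n} \<inter> A)" by simp
  also have "{..<n} \<inter> A = A" using assms by blast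
  finally show ?thesis .
qed

lemma adj_arcs_cong: "arcs n S = arcs n S' \<Longrightarrow> adj n S = adj n S'"
  unfolding adj_def by (intro ext) simp

lemma walk_len_arcs_cong: "arcs n S = arcs n S' \<Longrightarrow> walk_len n S = walk_len n S'"
  unfolding walk_len_def using adj_arcs_cong[of n S S'] by (intro ext) simp

lemma cost_sum_arcs_cong:
  assumes "arcs n S = arcs n S'"
  shows "cost_sum n S = cost_sum n S'"
proof -
  have "gdist n S = gdist n S'"
    using walk_len_arcs_cong[OF assms] by (intro ext) (simp add: gdist_def reachable_def)
  then show ?thesis by (intro ext) (simp add: cost_sum_def)
qed

lemma connected_U_arcs_cong: "arcs n S = arcs n S' \<Longrightarrow> connected_U n S = connected_U n S'"
  unfolding connected_U_def reachable_def using walk_len_arcs_cong[of n S S'] by simp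

lemma is_cycle_arcs_cong: "arcs n S = arcs n S' \<Longrightarrow> is_cycle n S = is_cycle n S'"
  unfolding is_cycle_def by simp

section \<open>Cycles of the multigraph\<close>

lemma cycle_vertices_set:
  assumes "length es = length vs" "2 \<le> length vs"
    and E: "\<forall>m<length vs. es ! m = (vs ! m, vs ! (Suc m mod length vs)) \<or>
                          es ! m = (vs ! (Suc m mod length vs), vs ! m)"
  shows "cycle_vertices (set es) = set vs"
proof -
  have ends: "fst (es ! m) \<in> set vs \<and> snd (es ! m) \<in> set vs" if m: "m < length vs" for m
  proof -
    have "Suc m mod length vs < length vs" using assms(2) by (intro mod_less_divisor) linarith
    then have "vs ! m \<in> set vs" "vs ! (Suc m mod length vs) \<in> set vs" using m by simp_all
    with E[rule_format, OF m] show ?thesis by auto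
  qed
  have starts: "vs ! m \<in> {fst (es ! m), snd (es ! m)}" if m: "m < length vs" for m
    using E[rule_format, OF m] by auto
  show ?thesis
  proof
    show "cycle_vertices (set es) \<subseteq> set vs"
    proof
      fix a assume "a \<in> cycle_vertices (set es)"
      then obtain e where e: "e \<in> set es" "a = fst e \<or> a = snd e"
        unfolding cycle_vertices_def by blast
      from e(1) obtain m where "m < length vs" "e = es ! m"
        using assms(1) by (auto simp: in_set_conv_nth)
      with ends e(2) show "a \<in> set vs" by blast
    qed
    show "set vs \<subseteq> cycle_vertices (set es)"
    proof
      fix a assume "a \<in> set vs"
      then obtain m where m: "m < length vs" "a = vs ! m" by (auto simp: in_set_conv_nth)
      then have "es ! m \<in> set es" using assms(1) by simp
      with starts[OF m(1)] m(2) show "a \<in> cycle_vertices (set es)"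
        unfolding cycle_vertices_def by blast
    qed
  qed
qed

lemma is_cycleE:
  assumes "is_cycle n S C"
  obtains vs where "set vs = cycle_vertices C" "distinct vs" "length vs = card C"
    "2 \<le> length vs" "C \<subseteq> arcs n S"
proof -
  obtain vs es where L: "length vs \<ge> 2" "length es = length vs" "distinct vs" "distinct es"
      "set es \<subseteq> arcs n S" "C = set es"
    and E: "\<forall>m<length vs. es ! m = (vs ! m, vs ! (Suc m mod length vs)) \<or>
                          es ! m = (vs ! (Suc m mod length vs), vs ! m)"
    using assms unfolding is_cycle_def by blast
  have "set vs = cycle_vertices C" using cycle_vertices_set[OF L(2,1) E] L(6) by simp
  moreover have "length vs = card C" using L(2,4,6) by (simp add: distinct_card)
  ultimately show ?thesis using that L by simp
qed

text \<open>The two arcs are distinct also when the cycle is a brace.\<close>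

lemma is_cycle_two_arcs:
  assumes "is_cycle n S C" "a \<in> cycle_vertices C"
  obtains e e' where "e \<in> C" "e' \<in> C" "e \<noteq> e'" "a \<in> {fst e, snd e}" "a \<in> {fst e', snd e'}"
proof -
  obtain vs es where L: "length vs \<ge> 2" "length es = length vs" "distinct vs" "distinct es"
      "set es \<subseteq> arcs n S" "C = set es"
    and E: "\<forall>m<length vs. es ! m = (vs ! m, vs ! (Suc m mod length vs)) \<or>
                          es ! m = (vs ! (Suc m mod length vs), vs ! m)"
    using assms(1) unfolding is_cycle_def by blast
  define l where "l = length vs"
  have l2: "2 \<le> l" using L(1) by (simp add: l_def)
  have "a \<in> set vs" using assms(2) cycle_vertices_set[OF L(2,1) E] L(6) by simp
  then obtain m where m: "m < l" "a = vs ! m" by (auto simp: in_set_conv_nth l_def)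
  define m' where "m' = (m + l - 1) mod l"
  have m': "m' < l" "Suc m' mod l = m" "m' \<noteq> m"
  proof -
    show "m' < l" using l2 by (simp add: m'_def)
    have "Suc m' mod l = (m + l) mod l" using l2 by (simp add: m'_def mod_Suc_eq)
    then show "Suc m' mod l = m" using m(1) by simp
    show "m' \<noteq> m"
    proof
      assume "m' = m"
      with \<open>Suc m' mod l = m\<close> have Suc_mod: "Suc m mod l = m" by simp
      show False
      proof (cases "Suc m < l")
        case True
        with Suc_mod show False by simp
      next
        case False
        with m(1) have "Suc m = l" by simp
        with Suc_mod l2 show False by simp
      qed
    qed
  qed
  show ?thesis
  proof (rule that)
    show "es ! m \<in> C" "es ! m' \<in> C" using m(1) m'(1) L(2,6) by (simp_all add: l_def)
    show "es ! m \<noteq> es ! m'"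
      using nth_eq_iff_index_eq[OF L(4), of m m'] L(2) m(1) m'(1,3) by (simp add: l_def)
    show "a \<in> {fst (es ! m), snd (es ! m)}"
      using E[rule_format, of m] m unfolding l_def by auto
    show "a \<in> {fst (es ! m'), snd (es ! m')}"
      using E[rule_format, of m'] m m' unfolding l_def by auto
  qed
qed

section \<open>Functional graphs\<close>

definition fun_profile :: "(nat \<Rightarrow> nat) \<Rightarrow> nat \<Rightarrow> nat set" where
  "fun_profile g i = {g i}"

lemma adj_fun_profile: "adj n (fun_profile g) u v \<longleftrightarrow> u < n \<and> v < n \<and> (v = g u \<or> u = g v)"
  by (auto simp: adj_def arcs_def fun_profile_def)

lemma arcs_fun_profile: "arcs n (fun_profile g) = {(i, g i) | i. i < n \<and> g i < n}"
  by (auto simp: arcs_def fun_profile_def)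

lemma adj_fun_profile_upd:
  assumes "adj n (fun_profile g) a b" "(a, b) \<noteq> (x, g x)" "(b, a) \<noteq> (x, g x)"
  shows "adj n (fun_profile (g(x := w))) a b"
  using assms by (auto simp: adj_fun_profile)

lemma walk_len_fun_profile_upd:
  assumes "p 0 = u" "p k = v" "\<forall>i<k. adj n (fun_profile g) (p i) (p (Suc i))"
    and "\<forall>i<k. (p i, p (Suc i)) \<noteq> (x, g x) \<and> (p (Suc i), p i) \<noteq> (x, g x)"
  shows "walk_len n (fun_profile (g(x := w))) u v k"
  using assms by (intro walk_len_intro[of p]) (auto intro: adj_fun_profile_upd)

lemma walk_len_fun_profile_upd_avoiding:
  assumes "p 0 = u" "p k = v" "\<forall>i<k. adj n (fun_profile g) (p i) (p (Suc i))"
    and "\<forall>i\<le>k. p i \<noteq> x"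
  shows "walk_len n (fun_profile (g(x := w))) u v k"
proof (rule walk_len_fun_profile_upd[OF assms(1-3)])
  have "p i \<noteq> x \<and> p (Suc i) \<noteq> x" if "i < k" for i
    using assms(4) that by simp
  then show "\<forall>i<k. (p i, p (Suc i)) \<noteq> (x, g x) \<and> (p (Suc i), p i) \<noteq> (x, g x)" by simp
qed

locale functional_graph =
  fixes n :: nat and g :: "nat \<Rightarrow> nat"
  assumes succ_less: "i < n \<Longrightarrow> g i < n"
    and succ_neq: "i < n \<Longrightarrow> g i \<noteq> i"
begin

definition periodic :: "nat \<Rightarrow> bool" where
  "periodic v \<longleftrightarrow> v < n \<and> (\<exists>m>0. (g ^^ m) v = v)"

definition period :: "nat \<Rightarrow> nat" where
  "period v = (LEAST m. m > 0 \<and> (g ^^ m) v = v)"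

definition depth :: "nat \<Rightarrow> nat" where
  "depth v = (LEAST m. periodic ((g ^^ m) v))"

definition tree :: "nat \<Rightarrow> nat set" where
  "tree a = {w. w < n \<and> (\<exists>m. (g ^^ m) w = a)}"

text \<open>\<open>P\<close> is attached to the rest of the graph only by the arc from \<open>a\<close> to \<open>g a\<close>.\<close>

definition pendant :: "nat set \<Rightarrow> nat \<Rightarrow> bool" where
  "pendant P a \<longleftrightarrow> a \<in> P \<and> P \<subseteq> {..<n} \<and> g a \<notin> P \<and>
     (\<forall>w<n. g w \<in> P \<longrightarrow> w \<in> P) \<and> (\<forall>w\<in>P. w \<noteq> a \<longrightarrow> g w \<in> P)"

definition star :: "nat \<Rightarrow> nat set" where
  "star c = {v. v < n \<and> (v = c \<or> (\<not> periodic v \<and> g v = c))}"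

lemma adj_succ: "v < n \<Longrightarrow> adj n (fun_profile g) v (g v)"
  by (simp add: adj_fun_profile succ_less)

lemma funpow_less: "v < n \<Longrightarrow> (g ^^ m) v < n"
  by (induction m) (auto simp: succ_less)

lemma walk_len_funpow: "v < n \<Longrightarrow> walk_len n (fun_profile g) v ((g ^^ m) v) m"
proof (induction m)
  case 0
  then show ?case by (simp add: walk_len_0_iff)
next
  case (Suc m)
  with adj_succ[OF funpow_less[OF Suc.prems, of m]] show ?case
    by (auto simp: walk_len_Suc_iff)
qed

lemma reachable_funpow: "v < n \<Longrightarrow> reachable n (fun_profile g) v ((g ^^ m) v)"
  using walk_len_funpow unfolding reachable_def by blast

lemma periodic_less: "periodic v \<Longrightarrow> v < n"
  by (simp add: periodic_def)

lemma periodic_succ: "periodic v \<Longrightarrow> periodic (g v)"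
proof -
  assume "periodic v"
  then obtain m where "v < n" "m > 0" "(g ^^ m) v = v" unfolding periodic_def by blast
  then have "(g ^^ m) (g v) = g v" by (simp flip: funpow_swap1)
  with \<open>v < n\<close> \<open>m > 0\<close> show ?thesis unfolding periodic_def using succ_less by blast
qed

lemma periodic_funpow: "periodic v \<Longrightarrow> periodic ((g ^^ m) v)"
  by (induction m) (auto simp: periodic_succ)

lemma periodic_funpow_n:
  assumes "v < n"
  shows "periodic ((g ^^ n) v)"
proof -
  have "\<not> inj_on (\<lambda>i. (g ^^ i) v) {..n}"
  proof
    assume "inj_on (\<lambda>i. (g ^^ i) v) {..n}"
    then have "card ((\<lambda>i. (g ^^ i) v) ` {..n}) = Suc n" by (simp add: card_image)
    moreover have "(\<lambda>i. (g ^^ i) v) ` {..n} \<subseteq> {..<n}" using funpow_less assms by auto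
    then have "card ((\<lambda>i. (g ^^ i) v) ` {..n}) \<le> n"
      by (metis card_lessThan card_mono finite_lessThan)
    ultimately show False by simp
  qed
  then obtain i j where ij: "i < j" "j \<le> n" "(g ^^ i) v = (g ^^ j) v"
    unfolding inj_on_def by (auto simp: linorder_neq_iff)
  have "(g ^^ (j - i)) ((g ^^ i) v) = (g ^^ (j - i + i)) v" by (simp add: funpow_add)
  also have "\<dots> = (g ^^ i) v" using ij by simp
  finally have "periodic ((g ^^ i) v)"
    unfolding periodic_def using ij(1) funpow_less[OF assms] zero_less_diff by blast
  then have "periodic ((g ^^ (n - i)) ((g ^^ i) v))" by (rule periodic_funpow)
  moreover have "(g ^^ (n - i)) ((g ^^ i) v) = (g ^^ (n - i + i)) v" by (simp add: funpow_add)
  ultimately show ?thesis using ij(1,2) by simp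
qed

lemma periodic_pred:
  assumes "periodic c"
  obtains c' where "periodic c'" "g c' = c"
proof -
  obtain m where "m > 0" "(g ^^ m) c = c" using assms unfolding periodic_def by blast
  then have "g ((g ^^ (m - 1)) c) = (g ^^ m) c" by (cases m) simp_all
  with \<open>(g ^^ m) c = c\<close> have "g ((g ^^ (m - 1)) c) = c" by simp
  with periodic_funpow[OF assms] that show ?thesis by blast
qed

lemma period:
  assumes "periodic v"
  shows "0 < period v" "(g ^^ period v) v = v"
proof -
  have "\<exists>m. m > 0 \<and> (g ^^ m) v = v" using assms unfolding periodic_def by blast
  then have "period v > 0 \<and> (g ^^ period v) v = v" unfolding period_def by (rule LeastI_ex)
  then show "0 < period v" "(g ^^ period v) v = v" by simp_all
qed

lemma funpow_neq_below_period: "0 < i \<Longrightarrow> i < period v \<Longrightarrow> (g ^^ i) v \<noteq> v"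
  unfolding period_def using not_less_Least by blast

lemma funpow_mod_period: "periodic v \<Longrightarrow> (g ^^ (m mod period v)) v = (g ^^ m) v"
  by (rule funpow_mod_eq) (rule period)

lemma funpow_period_mult: "periodic v \<Longrightarrow> (g ^^ (period v * k)) v = v"
  using funpow_mod_period[of v "period v * k"] by simp

lemma inj_on_funpow_period:
  assumes "periodic v"
  shows "inj_on (\<lambda>i. (g ^^ i) v) {..<period v}"
proof -
  have neq: "(g ^^ i) v \<noteq> (g ^^ j) v" if ij: "i < j" "j < period v" for i j
  proof
    assume e: "(g ^^ i) v = (g ^^ j) v"
    have "(g ^^ (period v - j + i)) v = (g ^^ (period v - j)) ((g ^^ i) v)"
      by (simp only: funpow_add o_apply)
    also have "\<dots> = (g ^^ (period v - j + j)) v"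
      by (simp only: e funpow_add o_apply)
    also have "\<dots> = v" using ij period(2)[OF assms] by simp
    finally have "(g ^^ (period v - j + i)) v = v" .
    moreover have "(g ^^ (period v - j + i)) v \<noteq> v"
      by (rule funpow_neq_below_period) (use ij in auto)
    ultimately show False by contradiction
  qed
  show ?thesis
  proof (rule inj_onI, rule ccontr)
    fix i j assume "i \<in> {..<period v}" "j \<in> {..<period v}" "(g ^^ i) v = (g ^^ j) v" "i \<noteq> j"
    then show False using neq[of i j] neq[of j i] by (auto simp: linorder_neq_iff)
  qed
qed

lemma periodic_inj:
  assumes "periodic a" "periodic b" "g a = g b"
  shows "a = b"
proof -
  let ?M = "period a * period b"
  have "0 < ?M" using period(1) assms by simp
  then obtain k where k: "?M = Suc k" using gr0_conv_Suc by blast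
  have "(g ^^ Suc k) x = (g ^^ k) (g x)" for x by (simp add: funpow_swap1)
  then have "(g ^^ ?M) a = (g ^^ k) (g a)" "(g ^^ ?M) b = (g ^^ k) (g b)"
    unfolding k by blast+
  moreover have "(g ^^ ?M) a = a" "(g ^^ ?M) b = b"
    using funpow_period_mult[OF assms(1), of "period b"] funpow_period_mult[OF assms(2), of "period a"]
    by (simp_all add: mult.commute)
  ultimately show ?thesis using assms(3) by simp
qed

lemma periodic_funpow_depth: "v < n \<Longrightarrow> periodic ((g ^^ depth v) v)"
  unfolding depth_def by (rule LeastI[of _ n]) (rule periodic_funpow_n)

lemma depth_Suc:
  assumes "v < n" "\<not> periodic v"
  shows "depth v = Suc (depth (g v))"
proof -
  have "depth v \<noteq> 0" using periodic_funpow_depth[OF assms(1)] assms(2) by (metis funpow_0)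
  then obtain d where d: "depth v = Suc d" by (cases "depth v") auto
  have "periodic ((g ^^ d) (g v))"
    using periodic_funpow_depth[OF assms(1)] d by (simp add: funpow_swap1)
  then have "depth (g v) \<le> d" unfolding depth_def by (rule Least_le)
  moreover have "periodic ((g ^^ Suc (depth (g v))) v)"
    using periodic_funpow_depth[OF succ_less[OF assms(1)]] by (simp add: funpow_swap1)
  then have "depth v \<le> Suc (depth (g v))" unfolding depth_def by (rule Least_le)
  ultimately show ?thesis using d by simp
qed

lemma pendant_tree:
  assumes "a < n" "\<not> periodic a"
  shows "pendant (tree a) a"
  unfolding pendant_def
proof (intro conjI allI impI ballI)
  show "a \<in> tree a" using assms by (auto simp: tree_def intro: exI[of _ 0])
  show "tree a \<subseteq> {..<n}" by (auto simp: tree_def)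
  show "g a \<notin> tree a"
  proof
    assume "g a \<in> tree a"
    then obtain m where "(g ^^ m) (g a) = a" by (auto simp: tree_def)
    then have "(g ^^ Suc m) a = a" by (simp add: funpow_swap1)
    with assms show False unfolding periodic_def by blast
  qed
  show "w \<in> tree a" if w: "w < n" "g w \<in> tree a" for w
  proof -
    obtain m where "(g ^^ m) (g w) = a" using w(2) by (auto simp: tree_def)
    then have "(g ^^ Suc m) w = a" by (simp add: funpow_swap1)
    with w(1) show ?thesis unfolding tree_def by blast
  qed
  show "g w \<in> tree a" if w: "w \<in> tree a" "w \<noteq> a" for w
  proof -
    obtain m where m: "(g ^^ m) w = a" "w < n" using w(1) by (auto simp: tree_def)
    with w(2) obtain k where "m = Suc k" by (cases m) auto
    with m have "(g ^^ k) (g w) = a" by (simp add: funpow_swap1)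
    with m(2) succ_less show ?thesis unfolding tree_def by blast
  qed
qed

lemma pendant_adj_cross:
  assumes P: "pendant P a" and bc: "adj n (fun_profile g) b c" "b \<in> P" "c \<notin> P"
  shows "b = a \<and> c = g a"
proof -
  have closed_pred: "\<And>w. w < n \<Longrightarrow> g w \<in> P \<Longrightarrow> w \<in> P"
    and closed_succ: "\<And>w. w \<in> P \<Longrightarrow> w \<noteq> a \<Longrightarrow> g w \<in> P"
    using P unfolding pendant_def by auto
  from bc(1) have "c < n" "c = g b \<or> b = g c" by (auto simp: adj_fun_profile)
  with bc(2,3) closed_pred have "c = g b" by auto
  with bc(2,3) closed_succ show ?thesis by auto
qed

lemma periodic_notin_tree: "periodic c \<Longrightarrow> \<not> periodic a \<Longrightarrow> c \<notin> tree a"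
  unfolding tree_def using periodic_funpow by blast

lemma exists_depth_two:
  "v < n \<Longrightarrow> \<not> periodic v \<Longrightarrow> \<not> periodic (g v) \<Longrightarrow>
    \<exists>z<n. \<not> periodic z \<and> \<not> periodic (g z) \<and> periodic (g (g z))"
proof (induction "depth v" arbitrary: v rule: less_induct)
  case less
  show ?case
  proof (cases "periodic (g (g v))")
    case True
    with less.prems show ?thesis by blast
  next
    case False
    have "depth (g v) < depth v" using depth_Suc[OF less.prems(1,2)] by simp
    with less.hyps[of "g v"] succ_less less.prems False show ?thesis by blast
  qed
qed

lemma walk_len_around_cycle:
  assumes "periodic x"
  shows "walk_len n (fun_profile (g(x := w))) (g x) x (period x - 1)"
proof (rule walk_len_intro[of "\<lambda>i. (g ^^ Suc i) x"])
  show "(g ^^ Suc 0) x = g x" by simp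
  show "(g ^^ Suc (period x - 1)) x = x" using period[OF assms] by simp
  show "\<forall>i<period x - 1. adj n (fun_profile (g(x := w))) ((g ^^ Suc i) x) ((g ^^ Suc (Suc i)) x)"
  proof (intro allI impI)
    fix i assume "i < period x - 1"
    then have "(g ^^ Suc i) x \<noteq> x" by (intro funpow_neq_below_period) auto
    moreover have "(g ^^ Suc i) x < n" using funpow_less periodic_less[OF assms] by blast
    ultimately show "adj n (fun_profile (g(x := w))) ((g ^^ Suc i) x) ((g ^^ Suc (Suc i)) x)"
      using succ_less by (simp add: adj_fun_profile)
  qed
qed

text \<open>The removed arc is bypassed the other way around the cycle.\<close>

lemma reachable_redirect_periodic:
  assumes "periodic x" "reachable n (fun_profile g) u v"
  shows "reachable n (fun_profile (g(x := w))) u v"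
proof (rule reachable_mono[OF _ assms(2)])
  fix a b assume ab: "adj n (fun_profile g) a b"
  have around: "reachable n (fun_profile (g(x := w))) x (g x)"
    using walk_len_around_cycle[OF assms(1)] unfolding reachable_def by (blast intro: walk_len_sym)
  show "reachable n (fun_profile (g(x := w))) a b"
  proof (cases "(a, b) = (x, g x) \<or> (b, a) = (x, g x)")
    case True
    with around show ?thesis by (auto intro: reachable_sym)
  next
    case False
    with ab show ?thesis by (auto intro: reachable_adj adj_fun_profile_upd)
  qed
qed

lemma walk_len_common_iterate:
  "walk_len n (fun_profile g) x v k \<Longrightarrow> \<exists>m j. (g ^^ m) v = (g ^^ j) x"
proof (induction k arbitrary: v)
  case 0
  then show ?case by (auto simp: walk_len_0_iff intro: exI[of _ 0])
next
  case (Suc k)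
  then obtain w where w: "walk_len n (fun_profile g) x w k" "adj n (fun_profile g) w v"
    by (auto simp: walk_len_Suc_iff)
  obtain m j where mj: "(g ^^ m) w = (g ^^ j) x" using Suc.IH[OF w(1)] by blast
  from w(2) have "v = g w \<or> w = g v" by (simp add: adj_fun_profile)
  then show ?case
  proof
    assume v: "v = g w"
    show ?thesis
    proof (cases m)
      case 0
      with mj v have "(g ^^ 0) v = (g ^^ Suc j) x" by simp
      then show ?thesis by blast
    next
      case (Suc m')
      with mj v have "(g ^^ m') v = (g ^^ j) x" by (simp add: funpow_swap1)
      then show ?thesis by blast
    qed
  next
    assume "w = g v"
    with mj have "(g ^^ Suc m) v = (g ^^ j) x" by (simp add: funpow_swap1)
    then show ?thesis by blast
  qed
qed

lemma period_ge_2: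
  assumes "periodic x"
  shows "2 \<le> period x"
proof -
  have "period x \<noteq> 1"
  proof
    assume "period x = 1"
    with period(2)[OF assms] have "g x = x" by simp
    with succ_neq periodic_less[OF assms] show False by blast
  qed
  with period(1)[OF assms] show ?thesis by linarith
qed

lemma is_cycle_fun_profile:
  assumes "is_cycle n (fun_profile g) C"
  shows "C = (\<lambda>c. (c, g c)) ` cycle_vertices C"
proof -
  obtain vs where vs: "set vs = cycle_vertices C" "distinct vs" "length vs = card C"
    "2 \<le> length vs" "C \<subseteq> arcs n (fun_profile g)"
    by (rule is_cycleE[OF assms])
  have arc: "e = (fst e, g (fst e))" if "e \<in> C" for e
    using vs(5) that by (auto simp: arcs_fun_profile)
  have "inj_on fst C"
  proof (rule inj_onI)
    fix e e' assume "e \<in> C" "e' \<in> C" "fst e = fst e'"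
    with arc show "e = e'" by metis
  qed
  then have "card (fst ` C) = card (cycle_vertices C)"
    using vs(1,3) distinct_card[OF vs(2)] by (simp add: card_image)
  moreover have "fst ` C \<subseteq> cycle_vertices C" by (auto simp: cycle_vertices_def)
  moreover have "finite (cycle_vertices C)" by (simp flip: vs(1))
  ultimately have "fst ` C = cycle_vertices C" by (intro card_subset_eq)
  moreover have "C = (\<lambda>c. (c, g c)) ` fst ` C" using arc by force
  ultimately show ?thesis by simp
qed

lemma is_cycle_fun_profile_pred:
  assumes "is_cycle n (fun_profile g) C" "a \<in> cycle_vertices C"
  shows "\<exists>t\<in>cycle_vertices C. g t = a"
proof -
  obtain e e' where e: "e \<in> C" "e' \<in> C" "e \<noteq> e'" "a \<in> {fst e, snd e}" "a \<in> {fst e', snd e'}"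
    by (rule is_cycle_two_arcs[OF assms])
  have C: "C = (\<lambda>c. (c, g c)) ` cycle_vertices C" by (rule is_cycle_fun_profile[OF assms(1)])
  then obtain c c' where "c \<in> cycle_vertices C" "c' \<in> cycle_vertices C" "e = (c, g c)" "e' = (c', g c')"
    using e(1,2) by blast
  with e(3-5) have "g c = a \<or> g c' = a" by auto
  with \<open>c \<in> cycle_vertices C\<close> \<open>c' \<in> cycle_vertices C\<close> show ?thesis by blast
qed

text \<open>Otherwise a non-periodic vertex of maximal depth in \<open>V\<close> would have a predecessor of larger depth.\<close>

lemma periodic_if_pred_closed:
  assumes "finite V" "V \<subseteq> {..<n}" "\<And>a. a \<in> V \<Longrightarrow> \<exists>t\<in>V. g t = a"
  shows "V \<subseteq> {c. periodic c}"
proof (rule ccontr)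
  define B where "B = V - {c. periodic c}"
  assume "\<not> V \<subseteq> {c. periodic c}"
  then have "B \<noteq> {}" "finite B" using assms(1) by (auto simp: B_def)
  then have "Max (depth ` B) \<in> depth ` B" by simp
  then obtain a where a: "Max (depth ` B) = depth a" "a \<in> B" by (rule imageE)
  have a_max: "depth b \<le> depth a" if "b \<in> B" for b
    using \<open>finite B\<close> that a(1) by (metis Max_ge finite_imageI imageI)
  obtain t where t: "t \<in> V" "g t = a" using assms(3) a(2) by (auto simp: B_def)
  have "\<not> periodic t" using t a(2) periodic_succ by (auto simp: B_def)
  with t have "t \<in> B" "depth t = Suc (depth a)" using depth_Suc assms(2) by (auto simp: B_def)
  with a_max[of t] show False by simp
qed

lemma cycle_vertices_periodic_arcs: "cycle_vertices ((\<lambda>c. (c, g c)) ` {c. periodic c}) = {c. periodic c}"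
proof -
  have "snd ` (\<lambda>c. (c, g c)) ` {c. periodic c} \<subseteq> {c. periodic c}" using periodic_succ by auto
  moreover have "fst ` (\<lambda>c. (c, g c)) ` {c. periodic c} = {c. periodic c}" by (simp add: image_image)
  ultimately show ?thesis unfolding cycle_vertices_def by blast
qed

lemma center_in_star: "c < n \<Longrightarrow> c \<in> star c"
  by (simp add: star_def)

end

locale connected_functional_graph = functional_graph +
  assumes reachable_all: "u < n \<Longrightarrow> v < n \<Longrightarrow> reachable n (fun_profile g) u v"
begin

abbreviation d :: "nat \<Rightarrow> nat \<Rightarrow> nat" where
  "d \<equiv> gdist n (fun_profile g)"

lemma d_adj_le: "u < n \<Longrightarrow> adj n (fun_profile g) a b \<Longrightarrow> d u b \<le> d u a + 1"
  using gdist_adj_le reachable_all adj_imp_less by blast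

lemma periodic_orbit:
  assumes "periodic x" "periodic c"
  shows "\<exists>m. c = (g ^^ m) x"
proof -
  obtain k where "walk_len n (fun_profile g) x c k"
    using reachable_all[OF periodic_less[OF assms(1)] periodic_less[OF assms(2)]]
    unfolding reachable_def by blast
  then obtain m j where mj: "(g ^^ m) c = (g ^^ j) x" using walk_len_common_iterate by blast
  let ?q = "period c * m"
  have "m \<le> ?q" using period(1)[OF assms(2)] by simp
  have "c = (g ^^ ?q) c" using funpow_period_mult[OF assms(2)] by simp
  also have "\<dots> = (g ^^ (?q - m)) ((g ^^ m) c)"
    using \<open>m \<le> ?q\<close> by (simp flip: funpow_add[THEN fun_cong, unfolded o_apply])
  also have "\<dots> = (g ^^ (?q - m + j)) x" using mj by (simp add: funpow_add)
  finally show ?thesis by blast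
qed

lemma periodic_eq_orbit:
  assumes "periodic x"
  shows "{c. periodic c} = (\<lambda>i. (g ^^ i) x) ` {..<period x}"
proof
  show "{c. periodic c} \<subseteq> (\<lambda>i. (g ^^ i) x) ` {..<period x}"
  proof
    fix c assume "c \<in> {c. periodic c}"
    then obtain m where "c = (g ^^ m) x" using periodic_orbit[OF assms] by blast
    then have "c = (g ^^ (m mod period x)) x" using funpow_mod_period[OF assms] by simp
    moreover have "m mod period x < period x" using period(1)[OF assms] by simp
    ultimately show "c \<in> (\<lambda>i. (g ^^ i) x) ` {..<period x}" by blast
  qed
  show "(\<lambda>i. (g ^^ i) x) ` {..<period x} \<subseteq> {c. periodic c}"
    using periodic_funpow[OF assms] by blast
qed

lemma card_periodic: "periodic x \<Longrightarrow> card {c. periodic c} = period x"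
  using periodic_eq_orbit inj_on_funpow_period by (simp add: card_image)

lemma gdist_pendant_out:
  assumes P: "pendant P a" and u: "u \<in> P" and v: "v < n" "v \<notin> P"
  shows "d u a + 1 + d (g a) v \<le> d u v"
proof -
  have un: "u < n" and an: "a < n" using P u by (auto simp: pendant_def)
  define \<phi> where "\<phi> w = (if w \<in> P then d u w else d u a + 1 + d (g a) w)" for w
  have "\<phi> c \<le> \<phi> b + 1" if bc: "adj n (fun_profile g) b c" for b c
  proof -
    consider "b \<in> P" "c \<in> P" | "b \<notin> P" "c \<notin> P" | "b \<in> P" "c \<notin> P" | "b \<notin> P" "c \<in> P"
      by blast
    then show ?thesis
    proof cases
      case 1
      then show ?thesis using d_adj_le[OF un bc] by (simp add: \<phi>_def)
    next
      case 2
      then show ?thesis using d_adj_le[OF succ_less[OF an] bc] by (simp add: \<phi>_def)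
    next
      case 3
      with pendant_adj_cross[OF P bc] show ?thesis by (simp add: \<phi>_def)
    next
      case 4
      with pendant_adj_cross[OF P adj_sym[OF bc]] show ?thesis by (simp add: \<phi>_def)
    qed
  qed
  then have "\<phi> v \<le> \<phi> u + d u v" using lipschitz_le_gdist reachable_all[OF un v(1)] by blast
  with u v show ?thesis by (simp add: \<phi>_def)
qed

lemma gdist_pendant_in:
  assumes "pendant P a" "u < n" "u \<notin> P" "v \<in> P"
  shows "d u (g a) + 1 + d a v \<le> d u v"
  using gdist_pendant_out[OF assms(1,4,2,3)] by (simp add: gdist_sym)

lemma shortest_walk_pendant_side:
  assumes P: "pendant P a" and uv: "u < n" "v < n" "u \<in> P \<longleftrightarrow> v \<in> P"
  obtains p where "p 0 = u" "p (d u v) = v" "\<forall>i<d u v. adj n (fun_profile g) (p i) (p (Suc i))"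
    "\<forall>i\<le>d u v. p i \<in> P \<longleftrightarrow> u \<in> P"
proof -
  obtain p where p: "p 0 = u" "p (d u v) = v" "\<forall>i<d u v. adj n (fun_profile g) (p i) (p (Suc i))"
    "inj_on p {..d u v}"
    by (rule shortest_walk[OF reachable_all[OF uv(1,2)]])
  have steps: "adj n (fun_profile g) (p i) (p (Suc i))" if "i < d u v" for i
    using p(3) that by blast
  have "p i \<in> P \<longleftrightarrow> u \<in> P" if i: "i \<le> d u v" for i
  proof (rule ccontr)
    assume side: "\<not> (p i \<in> P \<longleftrightarrow> u \<in> P)"
    have ends: "p 0 \<in> P \<longleftrightarrow> u \<in> P" "p (d u v) \<in> P \<longleftrightarrow> u \<in> P" using p(1,2) uv(3) by simp_all
    \<comment> \<open>The walk would leave the side of \<open>u\<close> and come back, crossing the arc at \<open>a\<close> twice.\<close>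
    obtain i1 where i1: "i1 < i" "p i1 \<in> P \<longleftrightarrow> u \<in> P" "\<not> (p (Suc i1) \<in> P \<longleftrightarrow> u \<in> P)"
      using exists_step_out[of "\<lambda>j. p j \<in> P \<longleftrightarrow> u \<in> P" 0 i] ends side by auto
    obtain i2 where i2: "i \<le> i2" "i2 < d u v" "\<not> (p i2 \<in> P \<longleftrightarrow> u \<in> P)" "p (Suc i2) \<in> P \<longleftrightarrow> u \<in> P"
      using exists_step_out[of "\<lambda>j. \<not> (p j \<in> P \<longleftrightarrow> u \<in> P)" i "d u v"] ends side i by auto
    have s1: "adj n (fun_profile g) (p i1) (p (Suc i1))" "adj n (fun_profile g) (p (Suc i2)) (p i2)"
      using steps[of i1] steps[of i2] adj_sym i1(1) i2(2) i by auto
    have "p i1 = p (Suc i2)"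
    proof (cases "u \<in> P")
      case True
      then show ?thesis
        using pendant_adj_cross[OF P s1(1)] pendant_adj_cross[OF P s1(2)] i1 i2 by auto
    next
      case False
      then show ?thesis
        using pendant_adj_cross[OF P adj_sym[OF s1(1)]] pendant_adj_cross[OF P adj_sym[OF s1(2)]]
          i1 i2 by auto
    qed
    moreover have "i1 \<noteq> Suc i2" using i1(1) i2(1) by simp
    ultimately show False using inj_onD[OF p(4)] i1(1) i2(2) i by fastforce
  qed
  with p(1-3) that show ?thesis by blast
qed

text \<open>A shortest walk from \<open>x\<close> either avoids the old arc or starts with it; then it is rerouted
  through \<open>w\<close>.\<close>

lemma gdist_redirect_le_Suc:
  assumes x: "x < n" and w: "w < n" and aw: "adj n (fun_profile (g(x := w))) w (g x)" and v: "v < n"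
  shows "gdist n (fun_profile (g(x := w))) x v \<le> d x v + 1"
proof -
  let ?S = "fun_profile (g(x := w))"
  let ?k = "d x v"
  obtain p where p: "p 0 = x" "p ?k = v" "\<forall>i<?k. adj n (fun_profile g) (p i) (p (Suc i))"
    "inj_on p {..?k}"
    by (rule shortest_walk[OF reachable_all[OF x v]])
  have not_x: "p i \<noteq> x" if "0 < i" "i \<le> ?k" for i
    using inj_onD[OF p(4), of i 0] that p(1) by auto
  have later: "adj n ?S (p i) (p (Suc i))" if "0 < i" "i < ?k" for i
    using adj_fun_profile_upd[OF p(3)[rule_format, of i]] not_x[of i] not_x[of "Suc i"] that by auto
  show ?thesis
  proof (cases "?k = 0")
    case True
    with p have "v = x" by simp
    then show ?thesis by simp
  next
    case k: False
    show ?thesis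
    proof (cases "p 1 = g x")
      case False
      have "adj n ?S (p 0) (p 1)"
        using adj_fun_profile_upd[OF p(3)[rule_format, of 0]] k False not_x[of 1] p(1) by auto
      with later have "\<forall>i<?k. adj n ?S (p i) (p (Suc i))" by (metis One_nat_def neq0_conv)
      with p(1,2) have "walk_len n ?S x v ?k" by (rule walk_len_intro)
      then show ?thesis by (auto dest: gdist_le_walk_len)
    next
      case True
      have "walk_len n ?S x v (Suc ?k)"
      proof (rule walk_len_intro[of "\<lambda>i. if i = 0 then x else if i = 1 then w else p (i - 1)"])
        show "\<forall>i<Suc ?k. adj n ?S ((if i = 0 then x else if i = 1 then w else p (i - 1)))
                               ((if Suc i = 0 then x else if Suc i = 1 then w else p (Suc i - 1)))"
        proof (intro allI impI)
          fix i assume i: "i < Suc ?k"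
          consider "i = 0" | "i = 1" | "1 < i" by linarith
          then show "adj n ?S ((if i = 0 then x else if i = 1 then w else p (i - 1)))
                               ((if Suc i = 0 then x else if Suc i = 1 then w else p (Suc i - 1)))"
          proof cases
            case 1
            then show ?thesis using x w by (simp add: adj_fun_profile)
          next
            case 2
            then show ?thesis using aw True by simp
          next
            case 3
            then show ?thesis using later[of "i - 1"] i by (simp add: Suc_diff_Suc)
          qed
        qed
      qed (use p(2) k in auto)
      then show ?thesis by (auto dest: gdist_le_walk_len)
    qed
  qed
qed

lemma is_cycle_eq_periodic_arcs:
  assumes "is_cycle n (fun_profile g) C"
  shows "C = (\<lambda>c. (c, g c)) ` {c. periodic c}"
proof -
  let ?V = "cycle_vertices C"
  have C: "C = (\<lambda>c. (c, g c)) ` ?V" by (rule is_cycle_fun_profile[OF assms])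
  obtain vs where vs: "set vs = ?V" "2 \<le> length vs" "C \<subseteq> arcs n (fun_profile g)"
    using is_cycleE[OF assms] by metis
  have "?V \<subseteq> {..<n}" using vs(3) C by (auto simp: arcs_fun_profile)
  moreover have "finite ?V" by (simp flip: vs(1))
  ultimately have V_periodic: "?V \<subseteq> {c. periodic c}"
    using periodic_if_pred_closed is_cycle_fun_profile_pred[OF assms] by blast
  have "?V \<noteq> {}" using vs(1,2) by auto
  then obtain a where a: "a \<in> ?V" by blast
  have closed: "g c \<in> ?V" if "c \<in> ?V" for c
  proof -
    have "(c, g c) \<in> C" using that by (subst C) (rule imageI)
    then have "snd (c, g c) \<in> snd ` C" by (rule imageI)
    then show ?thesis unfolding cycle_vertices_def by simp
  qed
  have "(g ^^ m) a \<in> ?V" for m by (induction m) (use a closed in auto)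
  then have "{c. periodic c} \<subseteq> ?V" using periodic_orbit V_periodic a by blast
  with V_periodic have "?V = {c. periodic c}" by (rule equalityI)
  with C show ?thesis by simp
qed

lemma is_cycle_periodic_arcs:
  assumes "periodic x"
  shows "is_cycle n (fun_profile g) ((\<lambda>c. (c, g c)) ` {c. periodic c})"
  unfolding is_cycle_def
proof (intro exI conjI)
  let ?p = "period x"
  let ?vs = "map (\<lambda>i. (g ^^ i) x) [0..<?p]"
  let ?es = "map (\<lambda>i. ((g ^^ i) x, (g ^^ Suc i) x)) [0..<?p]"
  have inj: "inj_on (\<lambda>i. (g ^^ i) x) {0..<?p}"
    using inj_on_funpow_period[OF assms] by (simp add: atLeast0LessThan)
  show "2 \<le> length ?vs" using period_ge_2[OF assms] by simp
  show "length ?es = length ?vs" by simp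
  show "distinct ?vs" using inj by (simp add: distinct_map)
  have "inj_on (\<lambda>i. ((g ^^ i) x, (g ^^ Suc i) x)) {0..<?p}"
    using inj unfolding inj_on_def by auto
  then show "distinct ?es" by (simp add: distinct_map)
  show "set ?es \<subseteq> arcs n (fun_profile g)"
    using funpow_less[OF periodic_less[OF assms]] succ_less by (auto simp: arcs_fun_profile)
  show "(\<lambda>c. (c, g c)) ` {c. periodic c} = set ?es"
    using periodic_eq_orbit[OF assms] by (auto simp: atLeast0LessThan)
  show "\<forall>m<length ?vs. ?es ! m = (?vs ! m, ?vs ! (Suc m mod length ?vs)) \<or>
                       ?es ! m = (?vs ! (Suc m mod length ?vs), ?vs ! m)"
  proof (intro allI impI disjI1)
    fix m assume m: "m < length ?vs"
    have "Suc m mod ?p < ?p" using period(1)[OF assms] by simp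
    then have "?vs ! (Suc m mod length ?vs) = (g ^^ Suc m) x"
      using funpow_mod_period[OF assms, of "Suc m"] by simp
    with m show "?es ! m = (?vs ! m, ?vs ! (Suc m mod length ?vs))" by simp
  qed
qed


lemma gdist_along_long_cycle:
  assumes x0: "periodic x0" and long: "6 \<le> period x0"
  shows "2 \<le> d x0 (g (g x0))" "3 \<le> d x0 (g (g (g x0)))"
proof -
  have R: "(g ^^ i) x0 \<noteq> (g ^^ j) x0" if "i < j" "j < 6" for i j
    using inj_onD[OF inj_on_funpow_period[OF x0], of i j] that long by auto
  have x0n: "x0 < n" using periodic_less[OF x0] .
  let ?x1 = "g x0" and ?x2 = "g (g x0)" and ?x3 = "g (g (g x0))"
  have "x0 \<noteq> ?x1" "x0 \<noteq> ?x2" "x0 \<noteq> ?x3" "x0 \<noteq> g ?x3" "x0 \<noteq> g (g ?x3)"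
    "?x1 \<noteq> ?x2" "?x1 \<noteq> ?x3" "?x1 \<noteq> g ?x3" "?x2 \<noteq> ?x3"
    using R[of 0 1] R[of 0 2] R[of 0 3] R[of 0 4] R[of 0 5] R[of 1 2] R[of 1 3] R[of 1 4] R[of 2 3]
    by (simp_all add: numeral_eq_Suc)
  note neq = this
  show "2 \<le> d x0 ?x2"
  proof (rule gdist_geI[OF reachable_all[OF x0n succ_less[OF succ_less[OF x0n]]]])
    fix k :: nat assume "k < 2"
    then have "k = 0 \<or> k = Suc 0" by auto
    then show "\<not> walk_len n (fun_profile g) x0 ?x2 k"
      using neq by (auto simp: walk_len_0_iff walk_len_1_iff adj_fun_profile)
  qed
  show "3 \<le> d x0 ?x3"
  proof (rule gdist_geI[OF reachable_all[OF x0n succ_less[OF succ_less[OF succ_less[OF x0n]]]]])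
    fix k :: nat assume "k < 3"
    then have "k = 0 \<or> k = Suc 0 \<or> k = Suc (Suc 0)" by auto
    then show "\<not> walk_len n (fun_profile g) x0 ?x3 k"
      using neq by (auto simp: walk_len_0_iff walk_len_1_iff walk_len_2_iff adj_fun_profile)
  qed
qed

end

section \<open>Equilibria\<close>

locale functional_equilibrium = functional_graph +
  assumes no_better_redirect: "x < n \<Longrightarrow> w < n \<Longrightarrow> w \<noteq> x \<Longrightarrow>
    cost_sum n (fun_profile g) x \<le> cost_sum n (fun_profile (g(x := w))) x"
begin

lemma redirect_sum_le:
  fixes f h :: "nat \<Rightarrow> nat"
  assumes "x < n" "w < n" "w \<noteq> x"
    and "\<And>v. v < n \<Longrightarrow> gdist n (fun_profile (g(x := w))) x v + f v \<le> gdist n (fun_profile g) x v + h v"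
  shows "(\<Sum>v<n. f v) \<le> (\<Sum>v<n. h v)"
proof -
  have "cost_sum n (fun_profile (g(x := w))) x + (\<Sum>v<n. f v) \<le> cost_sum n (fun_profile g) x + (\<Sum>v<n. h v)"
    using sum_mono[of "{..<n}", OF assms(4)] by (simp add: cost_sum_def sum.distrib)
  with no_better_redirect[OF assms(1-3)] show ?thesis by linarith
qed

lemma reachable_all: "u < n \<Longrightarrow> v < n \<Longrightarrow> reachable n (fun_profile g) u v"
proof (rule ccontr)
  let ?R = "reachable n (fun_profile g)"
  assume u: "u < n" and v: "v < n" and "\<not> ?R u v"
  define x where "x = (g ^^ n) u"
  have px: "periodic x" unfolding x_def using periodic_funpow_n[OF u] .
  have x: "x < n" using periodic_less[OF px] .
  have "?R u x" unfolding x_def using reachable_funpow[OF u] .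
  with \<open>\<not> ?R u v\<close> have not_xv: "\<not> ?R x v" using reachable_trans by blast
  then have vx: "v \<noteq> x" using reachable_refl by metis
  let ?R' = "reachable n (fun_profile (g(x := v)))"
  have "?R' x v" using x v by (intro reachable_adj) (simp add: adj_fun_profile)
  then have from_v: "?R' x y" if "?R v y" for y
    using reachable_redirect_periodic[OF px that] reachable_trans by blast
  \<comment> \<open>Joining the component of \<open>v\<close> saves \<open>n\<^sup>2\<close> for \<open>v\<close> itself but costs less than \<open>n\<close> per vertex.\<close>
  define f where "f y = (if ?R v y then n\<^sup>2 else 0)" for y
  define h where "h y = (if ?R x y \<or> ?R v y then n - 1 else 0)" for y
  have "gdist n (fun_profile (g(x := v))) x y + f y \<le> gdist n (fun_profile g) x y + h y"
    if y: "y < n" for y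
  proof -
    consider (a) "?R x y" | (b) "?R v y" "\<not> ?R x y" | (c) "\<not> ?R x y" "\<not> ?R v y" by blast
    then show ?thesis
    proof cases
      case a
      then have "\<not> ?R v y" using not_xv reachable_trans reachable_sym by metis
      moreover have "gdist n (fun_profile (g(x := v))) x y < n"
        using gdist_less[OF reachable_redirect_periodic[OF px a] x] .
      ultimately show ?thesis using a by (simp add: f_def h_def)
    next
      case b
      then show ?thesis using gdist_less[OF from_v[OF b(1)] x]
        by (simp add: f_def h_def gdist_unreachable)
    next
      case c
      then show ?thesis using gdist_le_square[OF x] by (simp add: f_def h_def gdist_unreachable)
    qed
  qed
  then have "(\<Sum>y<n. f y) \<le> (\<Sum>y<n. h y)" by (rule redirect_sum_le[OF x v vx])
  moreover have "(\<Sum>y<n. h y) \<le> n * (n - 1)"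
    using sum_mono[of "{..<n}" h "\<lambda>_. n - 1"] by (simp add: h_def)
  moreover have "f v \<le> (\<Sum>y<n. f y)" using v by (intro member_le_sum) auto
  then have "n\<^sup>2 \<le> (\<Sum>y<n. f y)" using reachable_refl by (simp add: f_def)
  moreover have "n * (n - 1) < n\<^sup>2" using v by (cases n) (auto simp: power2_eq_square)
  ultimately show False by linarith
qed

end

sublocale functional_equilibrium \<subseteq> connected_functional_graph
  using reachable_all by unfold_locales

context functional_equilibrium
begin

lemma redirect_to_grandparent:
  assumes z: "z < n" "\<not> periodic z" "\<not> periodic (g z)" "periodic (g (g z))"
  shows "card ({..<n} - tree (g z)) \<le> card (tree (g z) - tree z)"
proof -
  define y where "y = g z"
  define c where "c = g y"
  let ?A = "tree y" and ?B = "tree z"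
  let ?S = "fun_profile (g(z := c))"
  have y: "y < n" "\<not> periodic y" "y \<noteq> z" using z succ_less succ_neq unfolding y_def by auto
  have c: "c < n" "periodic c" "c \<noteq> z" using z unfolding c_def y_def by (auto intro: periodic_less)
  have A: "pendant ?A y" and B: "pendant ?B z" using pendant_tree y z by blast+
  have zA: "z \<in> ?A" using z(1) unfolding tree_def y_def by (auto intro: exI[of _ 1])
  have zB: "z \<in> ?B" and yB: "y \<notin> ?B" and cA: "c \<notin> ?A"
    using A B unfolding pendant_def y_def c_def by auto
  have "1 \<le> d z y" using gdist_ge_1 reachable_all z(1) y(1) y(3) by metis
  have "gdist n ?S z v + of_bool (v \<notin> ?A) \<le> d z v + of_bool (v \<in> ?A \<and> v \<notin> ?B)"
    if v: "v < n" for v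
  proof (cases "v \<in> ?A")
    case False
    obtain p where p: "p 0 = c" "p (d c v) = v" "\<forall>i<d c v. adj n (fun_profile g) (p i) (p (Suc i))"
      "\<forall>i\<le>d c v. p i \<in> ?A \<longleftrightarrow> c \<in> ?A"
      by (rule shortest_walk_pendant_side[OF A c(1) v]) (use cA False in simp)
    have "walk_len n ?S c v (d c v)"
      by (rule walk_len_fun_profile_upd_avoiding[OF p(1-3)]) (use p(4) cA zA in auto)
    moreover have "adj n ?S z c" using z(1) c(1) by (simp add: adj_fun_profile)
    ultimately have "walk_len n ?S z v (Suc (d c v))" by (blast intro: walk_len_Cons)
    then have "gdist n ?S z v \<le> Suc (d c v)" by (rule gdist_le_walk_len)
    moreover have "d z y + 1 + d c v \<le> d z v"
      using gdist_pendant_out[OF A zA v False] unfolding c_def .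
    ultimately show ?thesis using \<open>1 \<le> d z y\<close> False by simp
  next
    case True
    show ?thesis
    proof (cases "v \<in> ?B")
      case True
      obtain p where p: "p 0 = z" "p (d z v) = v" "\<forall>i<d z v. adj n (fun_profile g) (p i) (p (Suc i))"
        "\<forall>i\<le>d z v. p i \<in> ?B \<longleftrightarrow> z \<in> ?B"
        by (rule shortest_walk_pendant_side[OF B z(1) v]) (use zB True in simp)
      have "walk_len n ?S z v (d z v)"
      proof (rule walk_len_fun_profile_upd[OF p(1-3)])
        have "p i \<in> ?B \<and> p (Suc i) \<in> ?B" if "i < d z v" for i
          using p(4) zB that by simp
        with yB show "\<forall>i<d z v. (p i, p (Suc i)) \<noteq> (z, g z) \<and> (p (Suc i), p i) \<noteq> (z, g z)"
          unfolding y_def by fastforce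
      qed
      then show ?thesis using \<open>v \<in> ?A\<close> by (auto dest: gdist_le_walk_len)
    next
      case False
      obtain p where p: "p 0 = y" "p (d y v) = v" "\<forall>i<d y v. adj n (fun_profile g) (p i) (p (Suc i))"
        "\<forall>i\<le>d y v. p i \<in> ?B \<longleftrightarrow> y \<in> ?B"
        by (rule shortest_walk_pendant_side[OF B y(1) v]) (use yB False in simp)
      have "walk_len n ?S y v (d y v)"
        by (rule walk_len_fun_profile_upd_avoiding[OF p(1-3)]) (use p(4) yB zB in auto)
      moreover have "adj n ?S z c" "adj n ?S c y"
        using z(1) c(1) y(1) y(3) unfolding c_def by (auto simp: adj_fun_profile)
      ultimately have "walk_len n ?S z v (Suc (Suc (d y v)))" by (blast intro: walk_len_Cons)
      then have "gdist n ?S z v \<le> Suc (Suc (d y v))" by (rule gdist_le_walk_len)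
      moreover have "d z z + 1 + d y v \<le> d z v"
        using gdist_pendant_out[OF B zB v False] unfolding y_def .
      ultimately show ?thesis using \<open>v \<in> ?A\<close> False by simp
    qed
  qed
  then have "(\<Sum>v<n. of_bool (v \<notin> ?A) :: nat) \<le> (\<Sum>v<n. of_bool (v \<in> ?A \<and> v \<notin> ?B))"
    by (rule redirect_sum_le[OF z(1) c(1) c(3)])
  moreover have "{..<n} \<inter> {v. v \<notin> ?A} = {..<n} - ?A" by blast
  moreover have "{..<n} \<inter> {v. v \<in> ?A \<and> v \<notin> ?B} = ?A - ?B" using A unfolding pendant_def by blast
  ultimately have "card ({..<n} - ?A) \<le> card (?A - ?B)" by simp
  then show ?thesis unfolding y_def .
qed

lemma redirect_to_sibling:
  assumes y: "y < n" "\<not> periodic y" and c': "periodic c'" "g c' = g y"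
  shows "card (tree y) \<le> card ({..<n} - tree y - {c'})"
proof -
  let ?A = "tree y"
  let ?S = "fun_profile (g(c' := y))"
  have A: "pendant ?A y" using pendant_tree y by blast
  have c'n: "c' < n" using periodic_less[OF c'(1)] .
  have c'A: "c' \<notin> ?A" using periodic_notin_tree c'(1) y(2) by blast
  have yc': "y \<noteq> c'" using y(2) c'(1) by blast
  have "1 \<le> d c' (g y)"
    using gdist_ge_1 reachable_all c'n succ_less[OF y(1)] succ_neq[OF c'n] c'(2) by metis
  have "gdist n ?S c' v + of_bool (v \<in> ?A) \<le> d c' v + of_bool (v \<notin> ?A \<and> v \<noteq> c')"
    if v: "v < n" for v
  proof (cases "v \<in> ?A")
    case True
    obtain p where p: "p 0 = y" "p (d y v) = v" "\<forall>i<d y v. adj n (fun_profile g) (p i) (p (Suc i))"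
      "\<forall>i\<le>d y v. p i \<in> ?A \<longleftrightarrow> y \<in> ?A"
      by (rule shortest_walk_pendant_side[OF A y(1) v]) (use A True in \<open>simp add: pendant_def\<close>)
    have "walk_len n ?S y v (d y v)"
      by (rule walk_len_fun_profile_upd_avoiding[OF p(1-3)]) (use p(4) A c'A in \<open>auto simp: pendant_def\<close>)
    moreover have "adj n ?S c' y" using c'n y(1) by (simp add: adj_fun_profile)
    ultimately have "walk_len n ?S c' v (Suc (d y v))" by (blast intro: walk_len_Cons)
    then have "gdist n ?S c' v \<le> Suc (d y v)" by (rule gdist_le_walk_len)
    moreover have "d c' (g y) + 1 + d y v \<le> d c' v" by (rule gdist_pendant_in[OF A c'n c'A True])
    ultimately show ?thesis using \<open>1 \<le> d c' (g y)\<close> True by simp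
  next
    case False
    show ?thesis
    proof (cases "v = c'")
      case True
      then show ?thesis using c'A by simp
    next
      case False
      have "adj n ?S y (g c')" using y(1) yc' c'(2) succ_less by (simp add: adj_fun_profile)
      then have "gdist n ?S c' v \<le> d c' v + 1" by (rule gdist_redirect_le_Suc[OF c'n y(1) _ v])
      with False \<open>v \<notin> ?A\<close> show ?thesis by simp
    qed
  qed
  then have "(\<Sum>v<n. of_bool (v \<in> ?A) :: nat) \<le> (\<Sum>v<n. of_bool (v \<notin> ?A \<and> v \<noteq> c'))"
    by (rule redirect_sum_le[OF c'n y(1) yc'])
  moreover have "{..<n} \<inter> {v. v \<in> ?A} = ?A" using A unfolding pendant_def by blast
  moreover have "{..<n} \<inter> {v. v \<notin> ?A \<and> v \<noteq> c'} = {..<n} - ?A - {c'}" by blast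
  ultimately show ?thesis by simp
qed

text \<open>For a vertex of depth two, the two redirections above would give
  \<open>n - |A| \<le> |A - B| < |A| \<le> n - |A| - 1\<close> for the trees \<open>A\<close> of its parent and \<open>B\<close> of itself.\<close>

lemma periodic_or_succ_periodic:
  assumes "v < n"
  shows "periodic v \<or> periodic (g v)"
proof (rule ccontr)
  assume "\<not> (periodic v \<or> periodic (g v))"
  with assms obtain z where z: "z < n" "\<not> periodic z" "\<not> periodic (g z)" "periodic (g (g z))"
    using exists_depth_two by blast
  obtain c' where c': "periodic c'" "g c' = g (g z)" using periodic_pred[OF z(4)] by blast
  let ?A = "tree (g z)" and ?B = "tree z"
  have "finite ?A" by (simp add: tree_def)
  have "z \<in> ?A" "z \<in> ?B" using z(1) unfolding tree_def by (auto intro: exI[of _ 0] exI[of _ 1])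
  with \<open>finite ?A\<close> have "card (?A - ?B) < card ?A" by (intro psubset_card_mono) auto
  moreover have "c' \<in> {..<n} - ?A" using periodic_less periodic_notin_tree c'(1) z(3) by blast
  then have "card ({..<n} - ?A - {c'}) < card ({..<n} - ?A)" by (intro card_Diff1_less) auto
  moreover have "card ({..<n} - ?A) \<le> card (?A - ?B)" by (rule redirect_to_grandparent[OF z])
  moreover have "card ?A \<le> card ({..<n} - ?A - {c'})"
    by (rule redirect_to_sibling[OF succ_less[OF z(1)] z(3) c'])
  ultimately show False by linarith
qed

lemma periodic_succ_all: "w < n \<Longrightarrow> periodic (g w)"
  using periodic_or_succ_periodic periodic_succ by blast

lemma gdist_leaf:
  assumes v: "v < n" "\<not> periodic v" and u: "u < n" "u \<noteq> v"
  shows "d u (g v) + 1 \<le> d u v"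
proof -
  have "pendant {v} v"
    unfolding pendant_def using v succ_neq periodic_succ_all by auto
  from gdist_pendant_in[OF this u(1)] u(2) show ?thesis by simp
qed

text \<open>The other neighbours of \<open>g x0\<close> are leaves, hence dead ends.\<close>

lemma shortest_walk_along_cycle:
  assumes x0: "periodic x0" and p: "p 0 = x0" "p 1 = g x0" "\<forall>i<k. adj n (fun_profile g) (p i) (p (Suc i))"
    "inj_on p {..k}" and k: "0 < k" and v: "p k \<notin> star (g x0)"
  shows "2 \<le> k \<and> p 2 = g (g x0)"
proof -
  have "p k \<noteq> g x0" using v succ_less periodic_less[OF x0] by (auto simp: star_def)
  with p(2) k have k2: "2 \<le> k" by (cases "k = 1") auto
  have a12: "adj n (fun_profile g) (g x0) (p 2)"
    using p(3)[rule_format, of 1] p(2) k2 by (simp add: numeral_2_eq_2)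
  have p2x0: "p 2 \<noteq> x0" using inj_onD[OF p(4), of 2 0] p(1) k2 by auto
  have p21: "p 2 \<noteq> p 1" using inj_onD[OF p(4), of 2 1] k2 by auto
  have "p 2 = g (g x0)"
  proof (rule ccontr)
    assume ne: "p 2 \<noteq> g (g x0)"
    with a12 have gp2: "g (p 2) = g x0" "p 2 < n" by (auto simp: adj_fun_profile)
    have np2: "\<not> periodic (p 2)" using periodic_inj[OF _ x0] gp2(1) p2x0 by blast
    with gp2 v have "k \<noteq> 2" by (auto simp: star_def)
    with k2 have "adj n (fun_profile g) (p 2) (p 3)"
      using p(3)[rule_format, of 2] by (simp add: numeral_3_eq_3 numeral_2_eq_2)
    moreover have "p 3 \<noteq> p 1" using inj_onD[OF p(4), of 3 1] \<open>k \<noteq> 2\<close> k2 by auto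
    ultimately show False
      using gp2 p(2) np2 periodic_succ_all by (auto simp: adj_fun_profile)
  qed
  with k2 show ?thesis by simp
qed

lemma gdist_redirect_skip:
  assumes x0: "periodic x0" and v: "v < n" "v \<notin> star (g x0)"
  shows "gdist n (fun_profile (g(x0 := g (g x0)))) x0 v \<le> d x0 v"
proof -
  let ?S = "fun_profile (g(x0 := g (g x0)))"
  let ?k = "d x0 v"
  have x0n: "x0 < n" using periodic_less[OF x0] .
  obtain p where p: "p 0 = x0" "p ?k = v" "\<forall>i<?k. adj n (fun_profile g) (p i) (p (Suc i))"
    "inj_on p {..?k}"
    by (rule shortest_walk[OF reachable_all[OF x0n v(1)]])
  have not_x0: "p i \<noteq> x0" if "0 < i" "i \<le> ?k" for i
    using inj_onD[OF p(4), of i 0] that p(1) by auto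
  have later: "adj n ?S (p i) (p (Suc i))" if "0 < i" "i < ?k" for i
    using adj_fun_profile_upd[OF p(3)[rule_format, of i]] not_x0[of i] not_x0[of "Suc i"] that by auto
  show ?thesis
  proof (cases "?k = 0")
    case True
    with p have "v = x0" by simp
    then show ?thesis by simp
  next
    case k: False
    show ?thesis
    proof (cases "p 1 = g x0")
      case False
      have "adj n ?S (p 0) (p 1)"
        using adj_fun_profile_upd[OF p(3)[rule_format, of 0]] k False not_x0[of 1] p(1) by auto
      with later have "\<forall>i<?k. adj n ?S (p i) (p (Suc i))" by (metis One_nat_def neq0_conv)
      with p(1,2) have "walk_len n ?S x0 v ?k" by (rule walk_len_intro)
      then show ?thesis by (rule gdist_le_walk_len)
    next
      case True
      have k2: "2 \<le> ?k" and p2: "p 2 = g (g x0)"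
        using shortest_walk_along_cycle[OF x0 p(1) True p(3,4)] k p(2) v(2) by auto
      have "walk_len n ?S x0 v (?k - 1)"
      proof (rule walk_len_intro[of "\<lambda>i. if i = 0 then x0 else p (Suc i)"])
        show "\<forall>i<?k - 1. adj n ?S (if i = 0 then x0 else p (Suc i)) (if Suc i = 0 then x0 else p (Suc (Suc i)))"
        proof (intro allI impI)
          fix i assume i: "i < ?k - 1"
          show "adj n ?S (if i = 0 then x0 else p (Suc i)) (if Suc i = 0 then x0 else p (Suc (Suc i)))"
          proof (cases "i = 0")
            case True
            then show ?thesis using p2 x0n succ_less by (simp add: adj_fun_profile numeral_2_eq_2)
          next
            case False
            then show ?thesis using later[of "Suc i"] i by simp
          qed
        qed
      qed (use p(2) k2 in auto)
      then show ?thesis using gdist_le_walk_len by fastforce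
    qed
  qed
qed

lemma star_gdist_less:
  assumes x0: "periodic x0" and v: "v \<in> star c"
    and less: "gdist n (fun_profile (g(x0 := w))) x0 c < d x0 c"
  shows "gdist n (fun_profile (g(x0 := w))) x0 v < d x0 v"
proof (cases "v = c")
  case False
  let ?S = "fun_profile (g(x0 := w))"
  have x0n: "x0 < n" using periodic_less[OF x0] .
  from v False have leaf: "v < n" "\<not> periodic v" "g v = c" by (auto simp: star_def)
  then have "v \<noteq> x0" using x0 by blast
  have "reachable n ?S x0 c"
  proof (rule ccontr)
    assume "\<not> reachable n ?S x0 c"
    then have "gdist n ?S x0 c = n\<^sup>2" by (rule gdist_unreachable)
    moreover have "d x0 c \<le> n\<^sup>2" using gdist_le_square[OF x0n] .
    ultimately show False using less by simp
  qed
  moreover have "adj n ?S c v" using leaf \<open>v \<noteq> x0\<close> succ_less by (auto simp: adj_fun_profile)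
  ultimately have "gdist n ?S x0 v \<le> gdist n ?S x0 c + 1" by (rule gdist_adj_le)
  moreover have "d x0 c + 1 \<le> d x0 v" using gdist_leaf[OF leaf(1,2) x0n] \<open>v \<noteq> x0\<close> leaf(3) by simp
  ultimately show ?thesis using less by simp
qed (use less in simp)

text \<open>This is the equilibrium condition for \<open>x0\<close> redirecting its arc to its second successor.\<close>

lemma card_star_along_long_cycle:
  assumes x0: "periodic x0" and long: "6 \<le> period x0"
  shows "card (star (g (g x0))) + card (star (g (g (g x0)))) \<le> card (star (g x0))"
proof -
  let ?x1 = "g x0" and ?x2 = "g (g x0)" and ?x3 = "g (g (g x0))"
  let ?S = "fun_profile (g(x0 := ?x2))"
  have x0n: "x0 < n" using periodic_less[OF x0] .
  have per: "periodic ?x1" "periodic ?x2" "periodic ?x3" using x0 periodic_succ by blast+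
  have lt: "?x1 < n" "?x2 < n" "?x3 < n" using per periodic_less by blast+
  have far: "2 \<le> d x0 ?x2" "3 \<le> d x0 ?x3" by (rule gdist_along_long_cycle[OF x0 long])+
  have "d x0 ?x1 \<le> 1" using adj_succ[OF x0n] by (intro gdist_le_walk_len) (simp add: walk_len_1_iff)
  with far have ne: "?x2 \<noteq> x0" "?x3 \<noteq> ?x2" "?x1 \<noteq> x0" "?x3 \<noteq> ?x1"
    using succ_neq[OF x0n] succ_neq[OF lt(2)] by auto
  have near: "gdist n ?S x0 ?x2 < d x0 ?x2" "gdist n ?S x0 ?x3 < d x0 ?x3"
  proof -
    have a02: "adj n ?S x0 ?x2" using x0n lt by (simp add: adj_fun_profile)
    moreover have "adj n ?S ?x2 ?x3" using ne lt by (simp add: adj_fun_profile)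
    ultimately have "walk_len n ?S x0 ?x2 1" "walk_len n ?S x0 ?x3 2"
      by (simp_all add: walk_len_1_iff walk_len_2_iff numeral_2_eq_2) blast
    with far show "gdist n ?S x0 ?x2 < d x0 ?x2" "gdist n ?S x0 ?x3 < d x0 ?x3"
      by (auto dest!: gdist_le_walk_len)
  qed
  have disjoint: "star ?x1 \<inter> star ?x2 = {}" "star ?x1 \<inter> star ?x3 = {}" "star ?x2 \<inter> star ?x3 = {}"
    using per ne by (auto simp: star_def)
  have "gdist n ?S x0 v + (of_bool (v \<in> star ?x2) + of_bool (v \<in> star ?x3))
      \<le> d x0 v + of_bool (v \<in> star ?x1)" if v: "v < n" for v
  proof -
    consider "v \<in> star ?x2" | "v \<in> star ?x3" | "v \<in> star ?x1" | "v \<notin> star ?x1 \<union> star ?x2 \<union> star ?x3"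
      by blast
    then show ?thesis
    proof cases
      case 1
      with star_gdist_less[OF x0 1 near(1)] disjoint show ?thesis by auto
    next
      case 2
      with star_gdist_less[OF x0 2 near(2)] disjoint show ?thesis by auto
    next
      case 3
      have "adj n ?S ?x2 (g x0)" using ne lt by (simp add: adj_fun_profile)
      with gdist_redirect_le_Suc[OF x0n lt(2) _ v] 3 disjoint show ?thesis by auto
    next
      case 4
      with gdist_redirect_skip[OF x0 v] show ?thesis by simp
    qed
  qed
  then have "(\<Sum>v<n. of_bool (v \<in> star ?x2) + of_bool (v \<in> star ?x3) :: nat)
      \<le> (\<Sum>v<n. of_bool (v \<in> star ?x1))"
    by (rule redirect_sum_le[OF x0n lt(2) ne(1)])
  moreover have "star c \<subseteq> {..<n}" for c by (auto simp: star_def)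
  ultimately show ?thesis by (simp only: sum.distrib sum_of_bool_mem_lessThan)
qed

lemma period_le_5:
  assumes "periodic x"
  shows "period x \<le> 5"
proof (rule ccontr)
  assume "\<not> period x \<le> 5"
  then have long: "6 \<le> period c" if "periodic c" for c
    using card_periodic[OF assms] card_periodic[OF that] by simp
  let ?C = "{c. periodic c}"
  have "finite ?C" using periodic_less by (auto intro: finite_subset[of _ "{..<n}"])
  moreover have "?C \<noteq> {}" using assms by blast
  ultimately have "Max ((\<lambda>c. card (star c)) ` ?C) \<in> (\<lambda>c. card (star c)) ` ?C" by simp
  then obtain c where c: "Max ((\<lambda>c. card (star c)) ` ?C) = card (star c)" "periodic c"
    by (rule imageE) simp
  have c_max: "card (star c') \<le> card (star c)" if "periodic c'" for c'
    using \<open>finite ?C\<close> that c(1) by (metis Max_ge finite_imageI imageI mem_Collect_eq)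
  obtain c1 where c1: "periodic c1" "g c1 = c" using periodic_pred[OF c(2)] by blast
  obtain c0 where c0: "periodic c0" "g c0 = c1" using periodic_pred[OF c1(1)] by blast
  have "card (star c) + card (star (g c)) \<le> card (star c1)"
    using card_star_along_long_cycle[OF c0(1) long[OF c0(1)]] c0(2) c1(2) by simp
  moreover have "g c \<in> star (g c)" using center_in_star succ_less periodic_less[OF c(2)] by blast
  then have "0 < card (star (g c))" by (auto simp: card_gt_0_iff star_def)
  ultimately show False using c_max[OF c1(1)] by linarith
qed

lemma equilibrium_cycle_structure:
  assumes "0 < n"
  shows "connected_U n (fun_profile g) \<and> (\<exists>!C. is_cycle n (fun_profile g) C) \<and>
    (\<forall>C. is_cycle n (fun_profile g) C \<longrightarrow> card (cycle_vertices C) \<le> 5 \<and>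
       (\<forall>u<n. u \<in> cycle_vertices C \<or> (\<exists>w\<in>cycle_vertices C. adj n (fun_profile g) u w)))"
proof -
  have x: "periodic ((g ^^ n) 0)" using periodic_funpow_n assms by blast
  have "connected_U n (fun_profile g)" unfolding connected_U_def using reachable_all by blast
  moreover have "\<exists>!C. is_cycle n (fun_profile g) C"
    using is_cycle_periodic_arcs[OF x] is_cycle_eq_periodic_arcs by blast
  moreover have "card (cycle_vertices C) \<le> 5 \<and>
      (\<forall>u<n. u \<in> cycle_vertices C \<or> (\<exists>w\<in>cycle_vertices C. adj n (fun_profile g) u w))"
    if "is_cycle n (fun_profile g) C" for C
  proof -
    have V: "cycle_vertices C = {c. periodic c}"
      using is_cycle_eq_periodic_arcs[OF that] cycle_vertices_periodic_arcs by simp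
    have "card (cycle_vertices C) \<le> 5" using V card_periodic[OF x] period_le_5[OF x] by simp
    moreover have "\<forall>u<n. u \<in> cycle_vertices C \<or> (\<exists>w\<in>cycle_vertices C. adj n (fun_profile g) u w)"
      using V periodic_or_succ_periodic adj_succ by blast
    ultimately show ?thesis ..
  qed
  ultimately show ?thesis by blast
qed

end

section \<open>Unit budgets\<close>

lemma unit_budget_profile:
  assumes "valid_profile n (\<lambda>_. 1) S"
  obtains g where "\<And>i. i < n \<Longrightarrow> S i = {g i} \<and> g i < n \<and> g i \<noteq> i"
proof
  fix i assume "i < n"
  then have sub: "S i \<subseteq> {..<n} - {i}" and card: "card (S i) = 1"
    using assms unfolding valid_profile_def valid_strategy_def by auto
  from card obtain j where "S i = {j}" by (rule card_1_singletonE)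
  with sub show "S i = {the_elem (S i)} \<and> the_elem (S i) < n \<and> the_elem (S i) \<noteq> i" by simp
qed

lemma functional_equilibrium_if_sum_equilibrium:
  assumes eq: "sum_equilibrium n (\<lambda>_. 1) S" and g: "\<And>i. i < n \<Longrightarrow> S i = {g i} \<and> g i < n \<and> g i \<noteq> i"
  shows "functional_equilibrium n g"
proof
  show "g i < n" "g i \<noteq> i" if "i < n" for i using g that by auto
  fix x w assume xw: "x < n" "w < n" "w \<noteq> x"
  have arcs: "arcs n S = arcs n (fun_profile g)" "arcs n (S(x := {w})) = arcs n (fun_profile (g(x := w)))"
    using g unfolding arcs_def fun_profile_def by auto
  have "valid_strategy n (\<lambda>_. 1) x {w}" using xw unfolding valid_strategy_def by auto
  with eq xw(1) have "cost_sum n S x \<le> cost_sum n (S(x := {w})) x" unfolding sum_equilibrium_def by blast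
  then show "cost_sum n (fun_profile g) x \<le> cost_sum n (fun_profile (g(x := w))) x"
    using cost_sum_arcs_cong[OF arcs(1)] cost_sum_arcs_cong[OF arcs(2)] by simp
qed

theorem mainTheorem6:
  fixes n :: nat and S :: "nat \<Rightarrow> nat set"
  assumes "n \<ge> 2"
    and "sum_equilibrium n (\<lambda>_. 1) S"
  shows "connected_U n S \<and>
         (\<exists>!C. is_cycle n S C) \<and>
         (\<forall>C. is_cycle n S C \<longrightarrow>
              card (cycle_vertices C) \<le> 5 \<and>
              (\<forall>u<n. u \<in> cycle_vertices C \<or> (\<exists>w\<in>cycle_vertices C. adj n S u w)))"
proof -
  obtain g where g: "\<And>i. i < n \<Longrightarrow> S i = {g i} \<and> g i < n \<and> g i \<noteq> i"
    using unit_budget_profile assms(2) unfolding sum_equilibrium_def by blast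
  interpret functional_equilibrium n g
    using functional_equilibrium_if_sum_equilibrium[OF assms(2) g] .
  have arcs: "arcs n S = arcs n (fun_profile g)"
    using g unfolding arcs_def fun_profile_def by auto
  have "0 < n" using assms(1) by simp
  with equilibrium_cycle_structure show ?thesis
    unfolding adj_arcs_cong[OF arcs] connected_U_arcs_cong[OF arcs] is_cycle_arcs_cong[OF arcs] .
qed

end
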